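(* Let $G=(V,E)$ be a unit-weight graph, let $\mathrm{DS}$ be a dominating set of $G$, and let $\mathrm{IS}$ be an arbitrary maximal independent set of the subgraph of $G$ induced by $V\setminus\mathrm{DS}$. Then $\mathrm{Cut}(\mathrm{IS},V\setminus\mathrm{IS})\ge|V|-|\mathrm{DS}|$.
   Context: For a unit-weight graph, $W$ is the symmetric $\{0,1\}$ matrix with $W_{v,v}=1$ and $W_{u,v}=1$ iff $\{u,v\}\in E$. For $S\subseteq V$, $\mathrm{Cut}(S,V\setminus S)=\sum_{u\in S}\sum_{v\in V\setminus S}W_{u,v}$, i.e., the number of edges between $S$ and $V\setminus S$. A dominating set is a set $D$ such that every vertex not in $D$ has a neighbor in $D$. *)

theory Defs
  imports Main
begin

definition simple_graph :: "'a set \<Rightarrow> 'a set set \<Rightarrow> bool" where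
  "simple_graph V E \<longleftrightarrow> finite V \<and>
     (\<forall>e\<in>E. \<exists>u v. e = {u, v} \<and> u \<noteq> v \<and> u \<in> V \<and> v \<in> V)"

definition W :: "'a set set \<Rightarrow> 'a \<Rightarrow> 'a \<Rightarrow> nat" where
  "W E u v = (if u = v \<or> {u, v} \<in> E then 1 else 0)"

definition Cut :: "'a set set \<Rightarrow> 'a set \<Rightarrow> 'a set \<Rightarrow> nat" where
  "Cut E S T = (\<Sum>u\<in>S. \<Sum>v\<in>T. W E u v)"

definition dominating_set :: "'a set \<Rightarrow> 'a set set \<Rightarrow> 'a set \<Rightarrow> bool" where
  "dominating_set V E D \<longleftrightarrow> D \<subseteq> V \<and> (\<forall>v\<in>V - D. \<exists>u\<in>D. {u, v} \<in> E)"

definition independent_in :: "'a set \<Rightarrow> 'a set set \<Rightarrow> 'a set \<Rightarrow> bool" where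
  "independent_in U E I \<longleftrightarrow> I \<subseteq> U \<and> (\<forall>u\<in>I. \<forall>v\<in>I. {u, v} \<notin> E)"

definition maximal_independent_in :: "'a set \<Rightarrow> 'a set set \<Rightarrow> 'a set \<Rightarrow> bool" where
  "maximal_independent_in U E I \<longleftrightarrow> independent_in U E I \<and>
     (\<forall>J. independent_in U E J \<and> I \<subseteq> J \<longrightarrow> J = I)"

end

theory Submission
  imports Defs
begin

text \<open>Every vertex of IS has a neighbour in DS, and by maximality every vertex of
  (V - DS) - IS has a neighbour in IS. Hence the cut edges leaving IS towards DS
  project onto IS, those towards (V - DS) - IS project onto (V - DS) - IS, and these
  two edge sets are disjoint parts of the cut, which therefore has at least
  |IS| + |(V - DS) - IS| = |V| - |DS| edges.\<close>

definition cut_edges :: "'a set set \<Rightarrow> 'a set \<Rightarrow> 'a set \<Rightarrow> ('a \<times> 'a) set" where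
  "cut_edges E S T = {(u, v) \<in> S \<times> T. {u, v} \<in> E}"

lemma cut_edges_subset: "cut_edges E S T \<subseteq> S \<times> T"
  unfolding cut_edges_def by auto

lemma finite_cut_edges: "finite S \<Longrightarrow> finite T \<Longrightarrow> finite (cut_edges E S T)"
  using cut_edges_subset by (rule finite_subset) simp

lemma Cut_eq_card_cut_edges:
  assumes "finite S" "finite T" "S \<inter> T = {}"
  shows "Cut E S T = card (cut_edges E S T)"
proof -
  have "W E u v = (if (u, v) \<in> cut_edges E S T then 1 else 0)" if "(u, v) \<in> S \<times> T" for u v
  proof -
    have "u \<noteq> v" using that assms(3) by blast
    then show ?thesis using that by (simp add: W_def cut_edges_def)
  qed
  then have "Cut E S T = (\<Sum>p\<in>S \<times> T. if p \<in> cut_edges E S T then 1 else 0)"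
    unfolding Cut_def sum.cartesian_product by (intro sum.cong) auto
  also have "\<dots> = card (cut_edges E S T)"
    using assms(1,2) by (simp add: sum.If_cases Int_absorb1[OF cut_edges_subset])
  finally show ?thesis .
qed

lemma cut_edges_Un_right:
  "cut_edges E S (T\<^sub>1 \<union> T\<^sub>2) = cut_edges E S T\<^sub>1 \<union> cut_edges E S T\<^sub>2"
  unfolding cut_edges_def by auto

lemma card_cut_edges_Un_right:
  assumes "finite S" "finite T\<^sub>1" "finite T\<^sub>2" "T\<^sub>1 \<inter> T\<^sub>2 = {}"
  shows "card (cut_edges E S (T\<^sub>1 \<union> T\<^sub>2)) = card (cut_edges E S T\<^sub>1) + card (cut_edges E S T\<^sub>2)"
  unfolding cut_edges_Un_right
proof (rule card_Un_disjoint)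
  show "finite (cut_edges E S T\<^sub>1)" "finite (cut_edges E S T\<^sub>2)"
    using assms(1-3) by (simp_all add: finite_cut_edges)
  show "cut_edges E S T\<^sub>1 \<inter> cut_edges E S T\<^sub>2 = {}"
    using assms(4) by (auto simp: cut_edges_def)
qed

lemma card_le_card_cut_edges_left:
  assumes "finite S" "finite T" "\<forall>s\<in>S. \<exists>t\<in>T. {s, t} \<in> E"
  shows "card S \<le> card (cut_edges E S T)"
proof -
  have "S = fst ` cut_edges E S T"
    using assms(3) by (force simp: cut_edges_def)
  then show ?thesis
    by (metis card_image_le finite_cut_edges assms(1,2))
qed

lemma card_le_card_cut_edges_right:
  assumes "finite S" "finite T" "\<forall>t\<in>T. \<exists>s\<in>S. {s, t} \<in> E"
  shows "card T \<le> card (cut_edges E S T)"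
proof -
  have "T = snd ` cut_edges E S T"
    using assms(3) by (force simp: cut_edges_def)
  then show ?thesis
    by (metis card_image_le finite_cut_edges assms(1,2))
qed

lemma simple_graph_no_loop: "simple_graph V E \<Longrightarrow> {x} \<notin> E"
  unfolding simple_graph_def by (metis doubleton_eq_iff insert_absorb2)

lemma maximal_independent_in_dominates:
  assumes no_loop: "\<And>x. {x} \<notin> E" and "maximal_independent_in U E I" and "w \<in> U - I"
  shows "\<exists>u\<in>I. {u, w} \<in> E"
proof (rule ccontr)
  assume "\<not> (\<exists>u\<in>I. {u, w} \<in> E)"
  with assms have "independent_in U E (insert w I)"
    by (auto simp: maximal_independent_in_def independent_in_def insert_commute)
  with assms(2) have "insert w I = I"
    by (auto simp: maximal_independent_in_def)
  with assms(3) show False by blast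
qed

lemma card_le_Cut_if_dominated:
  assumes "finite V" "D \<subseteq> V" "I \<subseteq> V - D"
    and I_dominated: "\<forall>v\<in>I. \<exists>d\<in>D. {v, d} \<in> E"
    and rest_dominated: "\<forall>w\<in>V - D - I. \<exists>u\<in>I. {u, w} \<in> E"
  shows "card (V - D) \<le> Cut E I (V - I)"
proof -
  have finD: "finite D" and finI: "finite I" and finR: "finite (V - D - I)"
    using assms(1-3) by (auto intro: finite_subset)
  have "card (V - D) = card I + card (V - D - I)"
    using card_Un_disjoint[OF finI finR] assms(3) by (simp add: Un_absorb1)
  also have "\<dots> \<le> card (cut_edges E I D) + card (cut_edges E I (V - D - I))"
    using card_le_card_cut_edges_left[OF finI finD I_dominated]
      card_le_card_cut_edges_right[OF finI finR rest_dominated] by simp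
  also have "\<dots> = card (cut_edges E I (V - I))"
  proof -
    have "V - I = D \<union> (V - D - I)" "D \<inter> (V - D - I) = {}" using assms(2,3) by blast+
    then show ?thesis using card_cut_edges_Un_right[OF finI finD finR] by simp
  qed
  also have "\<dots> = Cut E I (V - I)"
    using Cut_eq_card_cut_edges[OF finI, of "V - I" E] assms(1) by auto
  finally show ?thesis .
qed

theorem lemma5p1:
  fixes V :: "'a set" and E :: "'a set set" and DS IS :: "'a set"
  assumes "simple_graph V E"
    and "dominating_set V E DS"
    and "maximal_independent_in (V - DS) E IS"
  shows "Cut E IS (V - IS) \<ge> card V - card DS"
proof -
  have fin: "finite V" using assms(1) by (simp add: simple_graph_def)
  have DS: "DS \<subseteq> V" and IS: "IS \<subseteq> V - DS"
    using assms(2,3) by (auto simp: dominating_set_def maximal_independent_in_def independent_in_def)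
  have "\<forall>v\<in>IS. \<exists>d\<in>DS. {v, d} \<in> E"
    using assms(2) IS by (auto simp: dominating_set_def insert_commute)
  moreover have "\<forall>w\<in>V - DS - IS. \<exists>u\<in>IS. {u, w} \<in> E"
    using maximal_independent_in_dominates[OF simple_graph_no_loop[OF assms(1)] assms(3)] by blast
  ultimately have "card (V - DS) \<le> Cut E IS (V - IS)"
    using card_le_Cut_if_dominated[OF fin DS IS] by blast
  then show ?thesis
    using card_Diff_subset[OF finite_subset[OF DS fin] DS] by simp
qed

end
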